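(* Let $\Gamma=(C_0,L_{\alpha_1},\dots,L_{\alpha_n},C_n)$ be a gallery in $\Phi$ and $0=i_0\le i_1\le\dots\le i_k=n$ integers. For $l=0,\dots,k-1$ let $\Psi_l$ be a saturated root subsystem of $\Phi$ and $\Delta_l$ a gallery in $\Phi$ lifting $(\Gamma_{[i_l,i_{l+1}]})_{\Psi_l}$, such that for each $l<k-1$ the final chamber of $\Delta_l$ equals the initial chamber of $\Delta_{l+1}$ (this holds in particular for the construction where, given $\Delta_l$ with final chamber $D$, one picks a nonempty $X\subset\Phi^s(D)\cap\Phi^+(C_{i_{l+1}})$, sets $\Psi_{l+1}=\mathbb R X\cap\Phi$ and lets $\Delta_{l+1}$ be the lifting of $(\Gamma_{[i_{l+1},i_{l+2}]})_{\Psi_{l+1}}$ with initial chamber $D$, and symmetrically to the left). Let $p_l:[1,|\Delta_l|]\to[1,i_{l+1}-i_l]$ be the increasing embedding with image $I_{\Psi_l}(\Gamma_{[i_l,i_{l+1}]})$, and define $p:[1,|\Delta_0|+\dots+|\Delta_{k-1}|]\to[1,n]$ by $p(j)=p_l(j-|\Delta_0|-\dots-|\Delta_{l-1}|)+i_l$ for $|\Delta_0|+\dots+|\Delta_{l-1}|<j\le|\Delta_0|+\dots+|\Delta_l|$. Then $(\Delta_0\cup\Delta_1\cup\dots\cup\Delta_{k-1},\Gamma)$ is a $p$-pair with positive sign and positive cosign.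
   Context: $E$ is a finite-dimensional real Euclidean space with inner product $(\cdot,\cdot)$; $\Phi\subset E$ is a finite (reduced) root system (not necessarily spanning, not necessarily crystallographic) with reflections $\omega_\alpha$ through $L_\alpha=\alpha^\perp$. A root subsystem is a nonempty $\Psi\subset\Phi$ stable under $\omega_\alpha$, $\alpha\in\Psi$; it is saturated if $\Psi=\mathbb R\Psi\cap\Phi$. $\mathrm{Ch}_X$ ($X\subset\Phi$) is the set of connected components of $E\setminus\bigcup_{\alpha\in X}L_\alpha$; $C_\Psi$ is the chamber of $\mathrm{Ch}_\Psi$ containing $C\in\mathrm{Ch}_\Phi$. Chambers are connected through $L_\alpha$ if the intersection of their closures with $L_\alpha$ has nonempty interior in $L_\alpha$. A gallery in $X$ is $(C_0,L_{\alpha_1},C_1,\dots,L_{\alpha_n},C_n)$ with $C_j\in\mathrm{Ch}_X$, $\alpha_j\in X$, $C_{j-1},C_j$ connected through $L_{\alpha_j}$; length $n$, initial chamber $C_0$, final chamber $C_n$. $\Gamma_{[i,j]}=(C_i,L_{\alpha_{i+1}},\dots,L_{\alpha_j},C_j)$. If the final chamber of $\Gamma$ equals the initial chamber of $\Delta=(C_n,L_{\beta_1},\dots,L_{\beta_m},D_m)$, then $\Gamma\cup\Delta=(C_0,L_{\alpha_1},\dots,L_{\alpha_n},C_n,L_{\beta_1},\dots,L_{\beta_m},D_m)$. $I_\Psi(\Gamma)=\{i:\alpha_i\in\Psi\}=\{i_1<\dots<i_m\}$ and $\Gamma_\Psi=((C_0)_\Psi,L_{\alpha_{i_1}},(C_{i_1})_\Psi,\dots,L_{\alpha_{i_m}},(C_{i_m})_\Psi)$.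 $\Phi^+(C)=\{\alpha\in\Phi:(e,\alpha)>0\ \forall e\in C\}$, $\Phi^s(C)$ the simple system in $\Phi^+(C)$; similarly for $\Psi$. $C$ lifts $D\in\mathrm{Ch}_\Psi$ if $\Psi^s(D)\subset\Phi^s(C)$; a gallery in $\Phi$ lifts a gallery in $\Psi$ if the wall sequences coincide and each $j$th chamber of the first lifts the $j$th chamber of the second. For galleries $\Gamma=(C_0,L_{\alpha_1},\dots,C_n)$, $\Delta=(D_0,L_{\beta_1},\dots,D_m)$ in $\Phi$ and increasing $p:[1,m]\to[1,n]$, $(\Delta,\Gamma)$ is a $p$-pair if $L_{\alpha_{p(i)}}=L_{\beta_i}$ for all $i$; its sign has $\epsilon_i=1$ iff $L_{\beta_i}$ does not separate $D_i$ and $C_{p(i)}$, its cosign has $\mu_i=1$ iff $L_{\beta_i}$ does not separate $D_{i-1}$ and $C_{p(i)-1}$ (otherwise $-1$); positive means all entries are $1$. *)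

theory Defs
  imports "HOL-Analysis.Analysis"
begin

definition hyp :: "'a::euclidean_space \<Rightarrow> 'a set" where
  "hyp \<alpha> = {x. inner x \<alpha> = 0}"

definition refl :: "'a::euclidean_space \<Rightarrow> 'a \<Rightarrow> 'a" where
  "refl \<alpha> x = x - (2 * inner x \<alpha> / inner \<alpha> \<alpha>) *\<^sub>R \<alpha>"

text \<open>Finite reduced root system (not necessarily spanning, not necessarily crystallographic).\<close>
definition root_system :: "'a::euclidean_space set \<Rightarrow> bool" where
  "root_system \<Phi> \<longleftrightarrow> finite \<Phi> \<and> 0 \<notin> \<Phi>
     \<and> (\<forall>\<alpha>\<in>\<Phi>. \<forall>\<beta>\<in>\<Phi>. refl \<alpha> \<beta> \<in> \<Phi>)
     \<and> (\<forall>\<alpha>\<in>\<Phi>. \<forall>c::real. c *\<^sub>R \<alpha> \<in> \<Phi> \<longrightarrow> c = 1 \<or> c = -1)"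

definition root_subsystem :: "'a::euclidean_space set \<Rightarrow> 'a set \<Rightarrow> bool" where
  "root_subsystem \<Phi> \<Psi> \<longleftrightarrow> \<Psi> \<noteq> {} \<and> \<Psi> \<subseteq> \<Phi> \<and> (\<forall>\<alpha>\<in>\<Psi>. \<forall>\<beta>\<in>\<Psi>. refl \<alpha> \<beta> \<in> \<Psi>)"

definition saturated :: "'a::euclidean_space set \<Rightarrow> 'a set \<Rightarrow> bool" where
  "saturated \<Phi> \<Psi> \<longleftrightarrow> \<Psi> = span \<Psi> \<inter> \<Phi>"

definition Ch :: "'a::euclidean_space set \<Rightarrow> 'a set set" where
  "Ch X = components (UNIV - (\<Union>\<alpha>\<in>X. hyp \<alpha>))"

definition restr :: "'a::euclidean_space set \<Rightarrow> 'a set \<Rightarrow> 'a set" where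
  "restr \<Psi> C = (THE D. D \<in> Ch \<Psi> \<and> C \<subseteq> D)"

definition connected_through :: "'a::euclidean_space set \<Rightarrow> 'a set \<Rightarrow> 'a set \<Rightarrow> bool" where
  "connected_through C D L \<longleftrightarrow>
     (\<exists>U. openin (top_of_set L) U \<and> U \<noteq> {} \<and> U \<subseteq> closure C \<inter> closure D \<inter> L)"

definition pos :: "'a::euclidean_space set \<Rightarrow> 'a set \<Rightarrow> 'a set" where
  "pos X C = {\<alpha>\<in>X. \<forall>e\<in>C. inner e \<alpha> > 0}"

definition simple_system :: "'a::euclidean_space set \<Rightarrow> 'a set \<Rightarrow> bool" where
  "simple_system X S \<longleftrightarrow> finite S \<and> S \<subseteq> X \<and> independent S \<and>
     (\<forall>\<alpha>\<in>X. \<exists>c. \<alpha> = (\<Sum>\<delta>\<in>S. c \<delta> *\<^sub>R \<delta>) \<and> ((\<forall>\<delta>\<in>S. c \<delta> \<ge> 0) \<or> (\<forall>\<delta>\<in>S. c \<delta> \<le> 0)))"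

definition simple :: "'a::euclidean_space set \<Rightarrow> 'a set \<Rightarrow> 'a set" where
  "simple X C = (THE S. simple_system X S \<and> S \<subseteq> pos X C)"

definition lifts_ch :: "'a::euclidean_space set \<Rightarrow> 'a set \<Rightarrow> 'a set \<Rightarrow> 'a set \<Rightarrow> bool" where
  "lifts_ch \<Phi> \<Psi> C D \<longleftrightarrow> simple \<Psi> D \<subseteq> simple \<Phi> C"

text \<open>A gallery (C_0, L_1, C_1, ..., L_n, C_n) is represented by the list of chambers
  [C_0,...,C_n] and the list of walls (hyperplanes) [L_1,...,L_n].\<close>
type_synonym 'a gallery = "'a set list \<times> 'a set list"

definition glen :: "'a gallery \<Rightarrow> nat" where
  "glen \<Gamma> = length (snd \<Gamma>)"

definition chamber :: "'a gallery \<Rightarrow> nat \<Rightarrow> 'a set" where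
  "chamber \<Gamma> j = fst \<Gamma> ! j"

text \<open>The j-th wall, j = 1..n.\<close>
definition wall :: "'a gallery \<Rightarrow> nat \<Rightarrow> 'a set" where
  "wall \<Gamma> j = snd \<Gamma> ! (j - 1)"

definition init_ch :: "'a gallery \<Rightarrow> 'a set" where
  "init_ch \<Gamma> = chamber \<Gamma> 0"

definition final_ch :: "'a gallery \<Rightarrow> 'a set" where
  "final_ch \<Gamma> = chamber \<Gamma> (glen \<Gamma>)"

definition is_gallery :: "'a::euclidean_space set \<Rightarrow> 'a gallery \<Rightarrow> bool" where
  "is_gallery X \<Gamma> \<longleftrightarrow> length (fst \<Gamma>) = Suc (glen \<Gamma>)
     \<and> (\<forall>j\<le>glen \<Gamma>. chamber \<Gamma> j \<in> Ch X)
     \<and> (\<forall>j\<in>{1..glen \<Gamma>}. (\<exists>\<alpha>\<in>X. wall \<Gamma> j = hyp \<alpha>)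
            \<and> connected_through (chamber \<Gamma> (j - 1)) (chamber \<Gamma> j) (wall \<Gamma> j))"

definition subgallery :: "'a gallery \<Rightarrow> nat \<Rightarrow> nat \<Rightarrow> 'a gallery" where
  "subgallery \<Gamma> i j = (take (Suc (j - i)) (drop i (fst \<Gamma>)), take (j - i) (drop i (snd \<Gamma>)))"

text \<open>Concatenation \<Gamma> \<union> \<Delta> (meaningful when the final chamber of
  \<Gamma> is the initial chamber of \<Delta>).\<close>
definition gappend :: "'a gallery \<Rightarrow> 'a gallery \<Rightarrow> 'a gallery" where
  "gappend \<Gamma> \<Delta> = (fst \<Gamma> @ tl (fst \<Delta>), snd \<Gamma> @ snd \<Delta>)"

fun gconcat :: "'a gallery list \<Rightarrow> 'a gallery" where
  "gconcat [] = ([], [])"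
| "gconcat [\<Gamma>] = \<Gamma>"
| "gconcat (\<Gamma> # \<Delta> # \<Delta>s) = gappend \<Gamma> (gconcat (\<Delta> # \<Delta>s))"

definition Iset :: "'a::euclidean_space set \<Rightarrow> 'a gallery \<Rightarrow> nat set" where
  "Iset \<Psi> \<Gamma> = {i\<in>{1..glen \<Gamma>}. \<exists>\<alpha>\<in>\<Psi>. wall \<Gamma> i = hyp \<alpha>}"

definition grestr :: "'a::euclidean_space set \<Rightarrow> 'a gallery \<Rightarrow> 'a gallery" where
  "grestr \<Psi> \<Gamma> = (let idx = sorted_list_of_set (Iset \<Psi> \<Gamma>) in
     (map (\<lambda>j. restr \<Psi> (chamber \<Gamma> j)) (0 # idx), map (wall \<Gamma>) idx))"

definition lifts :: "'a::euclidean_space set \<Rightarrow> 'a set \<Rightarrow> 'a gallery \<Rightarrow> 'a gallery \<Rightarrow> bool" where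
  "lifts \<Phi> \<Psi> \<Delta> \<Gamma>' \<longleftrightarrow> snd \<Delta> = snd \<Gamma>' \<and> length (fst \<Delta>) = length (fst \<Gamma>')
     \<and> (\<forall>j<length (fst \<Delta>). lifts_ch \<Phi> \<Psi> (chamber \<Delta> j) (chamber \<Gamma>' j))"

definition separates :: "'a::euclidean_space set \<Rightarrow> 'a set \<Rightarrow> 'a set \<Rightarrow> bool" where
  "separates H A B \<longleftrightarrow> (\<exists>u. u \<noteq> 0 \<and> H = hyp u \<and>
      (\<forall>x\<in>A. inner x u > 0) \<and> (\<forall>y\<in>B. inner y u < 0))"

definition ppair :: "'a gallery \<Rightarrow> 'a gallery \<Rightarrow> (nat \<Rightarrow> nat) \<Rightarrow> bool" where
  "ppair \<Delta> \<Gamma> p \<longleftrightarrow> strict_mono_on {1..glen \<Delta>} p \<and> p ` {1..glen \<Delta>} \<subseteq> {1..glen \<Gamma>}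
     \<and> (\<forall>i\<in>{1..glen \<Delta>}. wall \<Gamma> (p i) = wall \<Delta> i)"

definition positive_sign :: "'a::euclidean_space gallery \<Rightarrow> 'a gallery \<Rightarrow> (nat \<Rightarrow> nat) \<Rightarrow> bool" where
  "positive_sign \<Delta> \<Gamma> p \<longleftrightarrow>
     (\<forall>i\<in>{1..glen \<Delta>}. \<not> separates (wall \<Delta> i) (chamber \<Delta> i) (chamber \<Gamma> (p i)))"

definition positive_cosign :: "'a::euclidean_space gallery \<Rightarrow> 'a gallery \<Rightarrow> (nat \<Rightarrow> nat) \<Rightarrow> bool" where
  "positive_cosign \<Delta> \<Gamma> p \<longleftrightarrow>
     (\<forall>i\<in>{1..glen \<Delta>}. \<not> separates (wall \<Delta> i) (chamber \<Delta> (i - 1)) (chamber \<Gamma> (p i - 1)))"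

end

theory Submission
  imports Defs
begin

text \<open>Walls of \<open>\<Gamma>\<close> outside \<open>\<Psi>\<close> do not change the \<open>\<Psi>\<close>-chamber, so between two consecutive
  indices of \<open>I\<^sub>\<Psi>\<close> all chambers of \<open>\<Gamma>\<close> have the same \<open>\<Psi>\<close>-chamber, and the chambers of the lift
  \<open>\<Delta>\<close> before and after the \<open>j\<close>-th wall lift the \<open>\<Psi>\<close>-chambers of the chambers of \<open>\<Gamma>\<close> before and
  after the wall \<open>p j\<close>. A chamber \<open>D\<close> lifting the \<open>\<Psi>\<close>-chamber of \<open>C\<close> lies on the same side as \<open>C\<close>
  of every wall of \<open>\<Psi>\<close>: a root of \<open>\<Psi>\<close> positive on \<open>C\<close> is a nonnegative combination of simple
  roots of \<open>\<Psi>\<close>, which are simple roots of \<open>\<Phi>\<close> at \<open>D\<close>, hence positive on \<open>D\<close>. This gives every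
  entry of the sign and the cosign; concatenating the lifts only shifts indices.\<close>

section \<open>Hyperplanes and chambers\<close>

lemma closed_hyp: "closed (hyp \<alpha>)"
proof -
  have "hyp \<alpha> = {x. \<alpha> \<bullet> x = 0}" by (auto simp: hyp_def inner_commute)
  thus ?thesis using closed_hyperplane by metis
qed

lemma subspace_hyp: "subspace (hyp \<alpha>)"
  unfolding hyp_def subspace_def by (auto simp: inner_add_left)

lemma hyp_scaleR: "c \<noteq> 0 \<Longrightarrow> hyp (c *\<^sub>R \<alpha>) = hyp \<alpha>"
  by (auto simp: hyp_def)

lemma hyp_subset_imp_parallel:
  assumes "\<alpha> \<noteq> 0" "hyp \<alpha> \<subseteq> hyp \<beta>"
  shows "\<beta> = (inner \<beta> \<alpha> / inner \<alpha> \<alpha>) *\<^sub>R \<alpha>"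
proof -
  define w where "w = \<beta> - (inner \<beta> \<alpha> / inner \<alpha> \<alpha>) *\<^sub>R \<alpha>"
  have "inner w \<alpha> = 0" using assms(1) by (simp add: w_def inner_diff_left)
  moreover from this have "inner w \<beta> = 0" using assms(2) by (auto simp: hyp_def)
  ultimately have "inner w w = 0" by (simp add: w_def inner_diff_right)
  thus ?thesis by (simp add: w_def)
qed

lemma hyp_subset_imp_eq:
  assumes "\<alpha> \<noteq> 0" "\<beta> \<noteq> 0" "hyp \<alpha> \<subseteq> hyp \<beta>"
  shows "hyp \<alpha> = hyp \<beta>"
proof -
  have \<beta>: "\<beta> = (inner \<beta> \<alpha> / inner \<alpha> \<alpha>) *\<^sub>R \<alpha>" by (rule hyp_subset_imp_parallel[OF assms(1,3)])
  hence "inner \<beta> \<alpha> / inner \<alpha> \<alpha> \<noteq> 0" using assms(2) by (metis scale_zero_left)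
  thus ?thesis by (subst \<beta>) (simp add: hyp_scaleR)
qed

text \<open>Removing one more hyperplane keeps \<open>U\<close> nonempty: otherwise the affine hull \<open>hyp \<alpha>\<close> of \<open>U\<close>
  would lie in it.\<close>
lemma openin_hyp_avoids_hyps:
  assumes "finite B" "\<alpha> \<noteq> 0" "\<forall>\<beta>\<in>B. \<beta> \<noteq> 0 \<and> hyp \<alpha> \<noteq> hyp \<beta>"
    and "openin (top_of_set (hyp \<alpha>)) U" "U \<noteq> {}"
  shows "\<exists>x\<in>U. \<forall>\<beta>\<in>B. x \<notin> hyp \<beta>"
  using assms(1,3-)
proof (induction B arbitrary: U rule: finite_induct)
  case empty thus ?case by auto
next
  case (insert \<beta> B)
  have U: "U \<subseteq> hyp \<alpha>" using openin_subset[OF insert.prems(2)] by simp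
  have "openin (top_of_set (hyp \<alpha>)) (U - (hyp \<alpha> \<inter> hyp \<beta>))"
    by (rule openin_diff[OF insert.prems(2)]) (simp add: closedin_closed_Int closed_hyp)
  moreover have "U - (hyp \<alpha> \<inter> hyp \<beta>) = U - hyp \<beta>" using U by blast
  ultimately have open_diff: "openin (top_of_set (hyp \<alpha>)) (U - hyp \<beta>)" by simp
  have "U - hyp \<beta> \<noteq> {}"
  proof
    assume "U - hyp \<beta> = {}"
    hence "affine hull U \<subseteq> hyp \<beta>"
      by (metis Diff_eq_empty_iff affine_hull_eq hull_mono subspace_hyp subspace_imp_affine)
    moreover have "affine hull (hyp \<alpha>) = hyp \<alpha>"
      by (simp add: affine_hull_eq subspace_hyp subspace_imp_affine)
    hence "affine hull U = hyp \<alpha>"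
      using affine_hull_openin[of "hyp \<alpha>" U] insert.prems(2,3) by metis
    ultimately show False using hyp_subset_imp_eq[of \<alpha> \<beta>] assms(2) insert.prems(1) by auto
  qed
  then obtain x where "x \<in> U - hyp \<beta>" "\<forall>\<gamma>\<in>B. x \<notin> hyp \<gamma>"
    using insert.IH[OF _ open_diff] insert.prems(1) by blast
  thus ?case by auto
qed

definition regular_set :: "'a::euclidean_space set \<Rightarrow> 'a set" where
  "regular_set X = UNIV - (\<Union>\<alpha>\<in>X. hyp \<alpha>)"

lemma Ch_eq_components: "Ch X = components (regular_set X)"
  by (simp add: Ch_def regular_set_def)

lemma regular_set_antimono: "\<Psi> \<subseteq> \<Phi> \<Longrightarrow> regular_set \<Phi> \<subseteq> regular_set \<Psi>"
  by (auto simp: regular_set_def)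

lemma open_regular_set: "finite X \<Longrightarrow> open (regular_set X)"
  unfolding regular_set_def using closed_hyp by (intro open_Diff closed_UN) auto

lemma Ch_nonempty: "C \<in> Ch X \<Longrightarrow> C \<noteq> {}"
  by (simp add: Ch_eq_components in_components_nonempty)

lemma Ch_connected: "C \<in> Ch X \<Longrightarrow> connected C"
  by (simp add: Ch_eq_components in_components_connected)

lemma Ch_subset_regular_set: "C \<in> Ch X \<Longrightarrow> C \<subseteq> regular_set X"
  by (simp add: Ch_eq_components in_components_subset)

lemma open_Ch: "finite X \<Longrightarrow> C \<in> Ch X \<Longrightarrow> open C"
  using open_regular_set open_components Ch_eq_components by metis

lemma Ch_inner_nonzero: "C \<in> Ch X \<Longrightarrow> \<alpha> \<in> X \<Longrightarrow> e \<in> C \<Longrightarrow> inner e \<alpha> \<noteq> 0"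
  using Ch_subset_regular_set[of C X] by (auto simp: regular_set_def hyp_def)

lemma Ch_inner_sign:
  assumes "C \<in> Ch X" "\<alpha> \<in> X"
  shows "(\<forall>e\<in>C. inner e \<alpha> > 0) \<or> (\<forall>e\<in>C. inner e \<alpha> < 0)"
proof (rule ccontr)
  assume "\<not> ?thesis"
  then obtain x y where xy: "x \<in> C" "y \<in> C" "inner x \<alpha> \<le> 0" "0 \<le> inner y \<alpha>"
    by (auto simp: not_less)
  then obtain z where "z \<in> C" "\<alpha> \<bullet> z = 0"
    using connected_ivt_hyperplane[OF Ch_connected[OF assms(1)] xy(1,2), of \<alpha> 0]
    by (auto simp: inner_commute)
  thus False using Ch_inner_nonzero[OF assms] by (metis inner_commute)
qed

lemma restr_unique:
  assumes "C \<in> Ch \<Phi>" "D \<in> Ch \<Psi>" "C \<subseteq> D"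
  shows "restr \<Psi> C = D"
  unfolding restr_def
proof (rule the_equality)
  fix D' assume D': "D' \<in> Ch \<Psi> \<and> C \<subseteq> D'"
  hence "D' \<inter> D \<noteq> {}" using assms(3) Ch_nonempty[OF assms(1)] by blast
  thus "D' = D" using components_nonoverlap D' assms(2) Ch_eq_components by metis
qed (use assms in simp)

lemma restr_in_Ch:
  assumes "\<Psi> \<subseteq> \<Phi>" "C \<in> Ch \<Phi>"
  shows "restr \<Psi> C \<in> Ch \<Psi>" "C \<subseteq> restr \<Psi> C"
proof -
  obtain x where x: "x \<in> C" using Ch_nonempty[OF assms(2)] by blast
  have sub: "C \<subseteq> regular_set \<Psi>"
    using Ch_subset_regular_set[OF assms(2)] regular_set_antimono[OF assms(1)] by blast
  define D where "D = connected_component_set (regular_set \<Psi>) x"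
  have D: "D \<in> Ch \<Psi>" unfolding D_def Ch_eq_components components_iff using x sub by blast
  have "C \<subseteq> D" unfolding D_def
    by (rule connected_component_maximal[OF x Ch_connected[OF assms(2)] sub])
  thus "restr \<Psi> C \<in> Ch \<Psi>" "C \<subseteq> restr \<Psi> C" using restr_unique[OF assms(2) D] D by simp_all
qed

text \<open>A point of the common facet off all walls of \<open>\<Psi>\<close> lies in one chamber of \<open>\<Psi>\<close>, which
  then contains both chambers, because it is open and meets both of them.\<close>
lemma restr_eq_across_wall:
  assumes "root_system \<Phi>" "\<Psi> \<subseteq> \<Phi>" "C \<in> Ch \<Phi>" "D \<in> Ch \<Phi>" "\<alpha> \<in> \<Phi>"
    and "connected_through C D (hyp \<alpha>)" "\<forall>\<beta>\<in>\<Psi>. hyp \<alpha> \<noteq> hyp \<beta>"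
  shows "restr \<Psi> C = restr \<Psi> D"
proof -
  have fin: "finite \<Psi>" and nonzero: "0 \<notin> \<Phi>"
    using assms(1,2) finite_subset unfolding root_system_def by blast+
  obtain U where U: "openin (top_of_set (hyp \<alpha>)) U" "U \<noteq> {}" "U \<subseteq> closure C \<inter> closure D"
    using assms(6) unfolding connected_through_def by blast
  obtain x where x: "x \<in> U" "\<forall>\<beta>\<in>\<Psi>. x \<notin> hyp \<beta>"
    using openin_hyp_avoids_hyps[OF fin _ _ U(1,2)] assms(2,5,7) nonzero by blast
  hence x_reg: "x \<in> regular_set \<Psi>" by (auto simp: regular_set_def)
  define E where "E = connected_component_set (regular_set \<Psi>) x"
  have E: "E \<in> Ch \<Psi>" unfolding E_def Ch_eq_components components_iff using x_reg by blast
  have into_E: "C' \<subseteq> E" if C': "C' \<in> Ch \<Phi>" "x \<in> closure C'" for C'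
  proof -
    have "x \<in> E" using x_reg by (simp add: E_def)
    hence "E \<inter> closure C' \<noteq> {}" using C'(2) by blast
    hence "E \<inter> C' \<noteq> {}" using open_Int_closure_eq_empty[OF open_Ch[OF fin E]] by blast
    moreover have "C' \<subseteq> regular_set \<Psi>"
      using Ch_subset_regular_set[OF C'(1)] regular_set_antimono[OF assms(2)] by blast
    ultimately show "C' \<subseteq> E"
      using components_maximal[of E "regular_set \<Psi>" C'] E Ch_connected[OF C'(1)] Ch_eq_components
      by blast
  qed
  show ?thesis
    using restr_unique[OF assms(3) E into_E] restr_unique[OF assms(4) E into_E] assms(3,4) x U(3)
    by blast
qed

lemma restr_eq_along_gallery:
  assumes "root_system \<Phi>" "\<Psi> \<subseteq> \<Phi>" "is_gallery \<Phi> \<Gamma>" "a \<le> b" "b \<le> glen \<Gamma>"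
    and "\<forall>m. a < m \<and> m \<le> b \<longrightarrow> (\<forall>\<beta>\<in>\<Psi>. wall \<Gamma> m \<noteq> hyp \<beta>)"
  shows "restr \<Psi> (chamber \<Gamma> a) = restr \<Psi> (chamber \<Gamma> b)"
  using assms(4-)
proof (induction b)
  case (Suc n)
  show ?case
  proof (cases "a = Suc n")
    case False
    hence IH: "restr \<Psi> (chamber \<Gamma> a) = restr \<Psi> (chamber \<Gamma> n)" using Suc by simp
    obtain \<alpha> where \<alpha>: "\<alpha> \<in> \<Phi>" "wall \<Gamma> (Suc n) = hyp \<alpha>"
      "connected_through (chamber \<Gamma> n) (chamber \<Gamma> (Suc n)) (hyp \<alpha>)"
      using assms(3) Suc.prems(2) unfolding is_gallery_def by fastforce
    have "chamber \<Gamma> n \<in> Ch \<Phi>" "chamber \<Gamma> (Suc n) \<in> Ch \<Phi>"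
      using assms(3) Suc.prems(2) unfolding is_gallery_def by auto
    moreover have "\<forall>\<beta>\<in>\<Psi>. hyp \<alpha> \<noteq> hyp \<beta>" using Suc.prems False \<alpha>(2) by auto
    ultimately show ?thesis using IH restr_eq_across_wall[OF assms(1,2) _ _ \<alpha>(1,3)] by simp
  qed simp
qed simp

section \<open>Simple systems\<close>

definition nonneg_comb :: "'a::euclidean_space set \<Rightarrow> 'a \<Rightarrow> bool" where
  "nonneg_comb S \<alpha> \<longleftrightarrow> (\<exists>c. \<alpha> = (\<Sum>\<delta>\<in>S. c \<delta> *\<^sub>R \<delta>) \<and> (\<forall>\<delta>\<in>S. c \<delta> \<ge> 0))"

lemma sum_if_eq_scaleR:
  assumes "finite S" "b \<in> S"
  shows "(\<Sum>\<delta>\<in>S. (if \<delta> = b then x else 0) *\<^sub>R \<delta>) = x *\<^sub>R (b::'a::real_vector)"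
proof -
  have "(\<Sum>\<delta>\<in>S. (if \<delta> = b then x else 0) *\<^sub>R \<delta>) = (\<Sum>\<delta>\<in>S. if \<delta> = b then x *\<^sub>R b else 0)"
    by (rule sum.cong) auto
  thus ?thesis using assms by simp
qed

lemma nonneg_comb_self: "finite S \<Longrightarrow> \<alpha> \<in> S \<Longrightarrow> nonneg_comb S \<alpha>"
  unfolding nonneg_comb_def
  by (rule exI[of _ "\<lambda>\<delta>. if \<delta> = \<alpha> then 1 else 0"]) (simp add: sum_if_eq_scaleR)

lemma refl_self: "\<alpha> \<noteq> 0 \<Longrightarrow> refl \<alpha> \<alpha> = - \<alpha>"
  by (simp add: refl_def algebra_simps scaleR_2)

lemma root_system_uminus: "root_system X \<Longrightarrow> \<alpha> \<in> X \<Longrightarrow> - \<alpha> \<in> X"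
  unfolding root_system_def using refl_self by metis

lemma nonneg_comb_of_vanishing_comb:
  fixes e :: "'a::euclidean_space"
  assumes "finite \<Delta>" "\<forall>\<delta>\<in>\<Delta>. inner e \<delta> > 0" "(\<Sum>\<delta>\<in>\<Delta>. g \<delta> *\<^sub>R \<delta>) = 0" "\<beta> \<in> \<Delta>"
    and "\<forall>\<delta>\<in>\<Delta>-{\<beta>}. g \<delta> \<ge> 0" "\<gamma> \<in> \<Delta>-{\<beta>}" "g \<gamma> > 0"
  shows "nonneg_comb (\<Delta>-{\<beta>}) \<beta>"
proof -
  have split: "g \<beta> *\<^sub>R \<beta> + (\<Sum>\<delta>\<in>\<Delta>-{\<beta>}. g \<delta> *\<^sub>R \<delta>) = 0"
    using assms(3) sum.remove[OF assms(1,4), of "\<lambda>\<delta>. g \<delta> *\<^sub>R \<delta>"] by simp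
  have "g \<beta> < 0"
  proof (rule ccontr)
    assume "\<not> g \<beta> < 0"
    hence "0 < (\<Sum>\<delta>\<in>\<Delta>. g \<delta> * inner e \<delta>)"
      using assms by (intro sum_pos2[of \<Delta> \<gamma>]) (auto intro!: mult_nonneg_nonneg simp: less_imp_le)
    also have "\<dots> = inner e (\<Sum>\<delta>\<in>\<Delta>. g \<delta> *\<^sub>R \<delta>)" by (simp add: inner_sum_right)
    finally show False using assms(3) by simp
  qed
  have "(\<Sum>\<delta>\<in>\<Delta>-{\<beta>}. (g \<delta> / - g \<beta>) *\<^sub>R \<delta>) = (1 / - g \<beta>) *\<^sub>R (\<Sum>\<delta>\<in>\<Delta>-{\<beta>}. g \<delta> *\<^sub>R \<delta>)"
    by (simp add: scaleR_sum_right)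
  also have "\<dots> = (1 / - g \<beta>) *\<^sub>R (- (g \<beta> *\<^sub>R \<beta>))" using split by (metis add.commute add_eq_0_iff)
  also have "\<dots> = \<beta>" using \<open>g \<beta> < 0\<close> by simp
  moreover have "\<forall>\<delta>\<in>\<Delta>-{\<beta>}. g \<delta> / - g \<beta> \<ge> 0"
    using assms(5) \<open>g \<beta> < 0\<close> by (simp add: divide_nonneg_neg)
  ultimately show ?thesis unfolding nonneg_comb_def by metis
qed

lemma nonneg_comb_remove:
  assumes "finite \<Delta>" "\<beta> \<in> \<Delta>" "nonneg_comb \<Delta> \<alpha>" "nonneg_comb (\<Delta>-{\<beta>}) \<beta>"
  shows "nonneg_comb (\<Delta>-{\<beta>}) \<alpha>"
proof -
  obtain c where c: "\<alpha> = (\<Sum>\<delta>\<in>\<Delta>. c \<delta> *\<^sub>R \<delta>)" "\<forall>\<delta>\<in>\<Delta>. c \<delta> \<ge> 0"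
    using assms(3) nonneg_comb_def by blast
  obtain d where d: "\<beta> = (\<Sum>\<delta>\<in>\<Delta>-{\<beta>}. d \<delta> *\<^sub>R \<delta>)" "\<forall>\<delta>\<in>\<Delta>-{\<beta>}. d \<delta> \<ge> 0"
    using assms(4) nonneg_comb_def by blast
  have "\<alpha> = c \<beta> *\<^sub>R \<beta> + (\<Sum>\<delta>\<in>\<Delta>-{\<beta>}. c \<delta> *\<^sub>R \<delta>)"
    using c(1) sum.remove[OF assms(1,2), of "\<lambda>\<delta>. c \<delta> *\<^sub>R \<delta>"] by simp
  also have "\<dots> = (\<Sum>\<delta>\<in>\<Delta>-{\<beta>}. (c \<beta> * d \<delta> + c \<delta>) *\<^sub>R \<delta>)"
    by (subst d(1)) (simp add: scaleR_sum_right scaleR_add_left sum.distrib)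
  finally show ?thesis
    unfolding nonneg_comb_def using c(2) d(2) assms(2)
    by (intro exI[of _ "\<lambda>\<delta>. c \<beta> * d \<delta> + c \<delta>"]) auto
qed

text \<open>Split a vanishing combination into its positive and negative parts; the two resulting
  equal vectors have nonpositive inner product, hence both vanish, which is impossible on one
  open side of a hyperplane unless all coefficients vanish.\<close>
lemma independent_if_pairwise_obtuse:
  fixes e :: "'a::euclidean_space"
  assumes "finite \<Delta>" "\<forall>\<delta>\<in>\<Delta>. inner e \<delta> > 0" "\<forall>a\<in>\<Delta>. \<forall>b\<in>\<Delta>. a \<noteq> b \<longrightarrow> inner a b \<le> 0"
  shows "independent \<Delta>"
proof
  assume "dependent \<Delta>"
  then obtain u where u: "\<exists>v\<in>\<Delta>. u v \<noteq> 0" "(\<Sum>v\<in>\<Delta>. u v *\<^sub>R v) = 0"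
    using dependent_finite[OF assms(1)] by blast
  define A where "A = {v\<in>\<Delta>. u v > 0}"
  define B where "B = {v\<in>\<Delta>. u v < 0}"
  have fin: "finite A" "finite B" using assms(1) by (auto simp: A_def B_def)
  have "(\<Sum>v\<in>\<Delta>. u v *\<^sub>R v) = (\<Sum>v\<in>A\<union>B. u v *\<^sub>R v)"
    by (rule sum.mono_neutral_right) (auto simp: A_def B_def assms(1))
  also have "\<dots> = (\<Sum>v\<in>A. u v *\<^sub>R v) + (\<Sum>v\<in>B. u v *\<^sub>R v)"
    by (rule sum.union_disjoint) (use fin in \<open>auto simp: A_def B_def\<close>)
  finally have eq: "(\<Sum>v\<in>A. u v *\<^sub>R v) = (\<Sum>v\<in>B. (- u v) *\<^sub>R v)"
    using u(2) by (simp add: sum_negf eq_neg_iff_add_eq_0)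
  define \<sigma> where "\<sigma> = (\<Sum>v\<in>A. u v *\<^sub>R v)"
  have "inner \<sigma> \<sigma> = inner (\<Sum>v\<in>A. u v *\<^sub>R v) (\<Sum>v\<in>B. (- u v) *\<^sub>R v)" using eq \<sigma>_def by simp
  also have "\<dots> = (\<Sum>a\<in>A. \<Sum>b\<in>B. u a * (- u b) * inner a b)"
    by (simp add: inner_sum_left inner_sum_right sum_distrib_left algebra_simps sum.swap[of _ B A] sum_negf)
  also have "\<dots> \<le> 0"
  proof (intro sum_nonpos)
    fix a b assume ab: "a \<in> A" "b \<in> B"
    hence "a \<noteq> b" "a \<in> \<Delta>" "b \<in> \<Delta>" by (auto simp: A_def B_def)
    hence "inner a b \<le> 0" using assms(3) by blast
    moreover have "u a * (- u b) \<ge> 0" using ab by (auto simp: A_def B_def mult_pos_neg less_imp_le)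
    ultimately show "u a * (- u b) * inner a b \<le> 0" by (rule mult_nonneg_nonpos[rotated])
  qed
  finally have \<sigma>0: "\<sigma> = 0" by (metis antisym inner_ge_zero inner_eq_zero_iff)
  have "A = {}"
  proof (rule ccontr)
    assume "A \<noteq> {}"
    then obtain a where "a \<in> A" by blast
    hence "0 < (\<Sum>v\<in>A. u v * inner e v)"
      using fin assms(2) by (intro sum_pos2[of _ a]) (auto simp: A_def)
    also have "\<dots> = inner e \<sigma>" by (simp add: \<sigma>_def inner_sum_right)
    finally show False using \<sigma>0 by simp
  qed
  moreover have "B = {}"
  proof (rule ccontr)
    assume "B \<noteq> {}"
    then obtain b where "b \<in> B" by blast
    hence "0 < (\<Sum>v\<in>B. (- u v) * inner e v)"
      using fin assms(2) by (intro sum_pos2[of _ b]) (auto simp: B_def mult_neg_pos less_imp_le mult_nonpos_nonneg)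
    also have "\<dots> = inner e \<sigma>" using eq by (simp add: \<sigma>_def inner_sum_right)
    finally show False using \<sigma>0 by simp
  qed
  ultimately show False using u(1) by (auto simp: A_def B_def neq_iff)
qed

text \<open>Otherwise the reflection \<open>b - c a\<close> (\<open>c > 0\<close>) of \<open>b\<close> is a root that is positive or negative on
  \<open>C\<close>; writing it or its negative through \<open>\<Delta>\<close> expresses \<open>b\<close> or \<open>a\<close> through the rest of \<open>\<Delta>\<close>.\<close>
lemma minimal_generating_set_obtuse:
  assumes rs: "root_system X" and C: "C \<in> Ch X" and e: "e \<in> C"
    and \<Delta>: "finite \<Delta>" "\<Delta> \<subseteq> pos X C" "\<forall>\<alpha>\<in>pos X C. nonneg_comb \<Delta> \<alpha>"
    and minimal: "\<forall>\<beta>\<in>\<Delta>. \<not> nonneg_comb (\<Delta>-{\<beta>}) \<beta>"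
    and ab: "a \<in> \<Delta>" "b \<in> \<Delta>" "a \<noteq> b"
  shows "inner a b \<le> 0"
proof (rule ccontr)
  assume "\<not> inner a b \<le> 0"
  hence ab_pos: "inner b a > 0" by (simp add: inner_commute)
  have e\<Delta>: "\<forall>\<delta>\<in>\<Delta>. inner e \<delta> > 0" using \<Delta>(2) e by (auto simp: pos_def)
  have aX: "a \<in> X" "b \<in> X" using ab \<Delta>(2) by (auto simp: pos_def)
  hence "a \<noteq> 0" using rs root_system_def by metis
  define c where "c = 2 * inner b a / inner a a"
  have c_pos: "c > 0" using ab_pos \<open>a \<noteq> 0\<close> by (simp add: c_def)
  define \<gamma> where "\<gamma> = b - c *\<^sub>R a"
  have \<gamma>X: "\<gamma> \<in> X" using rs aX unfolding root_system_def \<gamma>_def c_def refl_def by blast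
  have comb: "(\<Sum>\<delta>\<in>\<Delta>. (d \<delta> + (if \<delta> = b then x else 0) + (if \<delta> = a then y else 0)) *\<^sub>R \<delta>)
      = (\<Sum>\<delta>\<in>\<Delta>. d \<delta> *\<^sub>R \<delta>) + x *\<^sub>R b + y *\<^sub>R a" for d x y
    by (simp add: scaleR_add_left sum.distrib sum_if_eq_scaleR[OF \<Delta>(1)] ab)
  from Ch_inner_sign[OF C \<gamma>X] show False
  proof
    assume "\<forall>e\<in>C. 0 < inner e \<gamma>"
    hence "\<gamma> \<in> pos X C" using \<gamma>X by (auto simp: pos_def)
    then obtain d where d: "\<gamma> = (\<Sum>\<delta>\<in>\<Delta>. d \<delta> *\<^sub>R \<delta>)" "\<forall>\<delta>\<in>\<Delta>. d \<delta> \<ge> 0"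
      using \<Delta>(3) nonneg_comb_def by blast
    define g where "g \<delta> = d \<delta> + (if \<delta> = b then -1 else 0) + (if \<delta> = a then c else 0)" for \<delta>
    have "(\<Sum>\<delta>\<in>\<Delta>. g \<delta> *\<^sub>R \<delta>) = 0"
      unfolding g_def comb d(1)[symmetric] by (simp add: \<gamma>_def)
    moreover have "\<forall>\<delta>\<in>\<Delta>-{b}. g \<delta> \<ge> 0" using d(2) c_pos by (auto simp: g_def)
    moreover have "g a > 0" using d(2) c_pos ab by (auto simp: g_def add_nonneg_pos)
    ultimately have "nonneg_comb (\<Delta>-{b}) b"
      using nonneg_comb_of_vanishing_comb[OF \<Delta>(1) e\<Delta> _ ab(2), of g a] ab by blast
    thus False using minimal ab(2) by blast
  next
    assume "\<forall>e\<in>C. inner e \<gamma> < 0"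
    hence "- \<gamma> \<in> pos X C" using root_system_uminus[OF rs \<gamma>X] by (auto simp: pos_def)
    then obtain d where d: "- \<gamma> = (\<Sum>\<delta>\<in>\<Delta>. d \<delta> *\<^sub>R \<delta>)" "\<forall>\<delta>\<in>\<Delta>. d \<delta> \<ge> 0"
      using \<Delta>(3) nonneg_comb_def by blast
    define g where "g \<delta> = d \<delta> + (if \<delta> = b then 1 else 0) + (if \<delta> = a then -c else 0)" for \<delta>
    have "(\<Sum>\<delta>\<in>\<Delta>. g \<delta> *\<^sub>R \<delta>) = 0"
      unfolding g_def comb d(1)[symmetric] by (simp add: \<gamma>_def)
    moreover have "\<forall>\<delta>\<in>\<Delta>-{a}. g \<delta> \<ge> 0" using d(2) c_pos ab by (auto simp: g_def)
    moreover have "g b > 0" using d(2) c_pos ab by (auto simp: g_def add_nonneg_pos)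
    ultimately have "nonneg_comb (\<Delta>-{a}) a"
      using nonneg_comb_of_vanishing_comb[OF \<Delta>(1) e\<Delta> _ ab(1), of g b] ab by blast
    thus False using minimal ab(1) by blast
  qed
qed

text \<open>A subset of \<open>pos X C\<close> of least cardinality generating it as a cone is a simple system.\<close>
lemma simple_system_exists:
  assumes rs: "root_system X" and C: "C \<in> Ch X"
  shows "\<exists>S. simple_system X S \<and> S \<subseteq> pos X C"
proof -
  define gen where "gen \<Delta> \<longleftrightarrow> \<Delta> \<subseteq> pos X C \<and> (\<forall>\<alpha>\<in>pos X C. nonneg_comb \<Delta> \<alpha>)" for \<Delta>
  have fin_pos: "finite (pos X C)" using rs by (simp add: root_system_def pos_def)
  have "gen (pos X C)" unfolding gen_def using nonneg_comb_self[OF fin_pos] by blast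
  then obtain \<Delta> where \<Delta>: "gen \<Delta>" and least: "\<And>\<Delta>'. gen \<Delta>' \<Longrightarrow> card \<Delta> \<le> card \<Delta>'"
    using ex_has_least_nat[of gen "pos X C" card] by blast
  have \<Delta>_pos: "\<Delta> \<subseteq> pos X C" using \<Delta> gen_def by blast
  hence fin: "finite \<Delta>" using fin_pos finite_subset by blast
  obtain e where e: "e \<in> C" using Ch_nonempty[OF C] by blast
  have minimal: "\<forall>\<beta>\<in>\<Delta>. \<not> nonneg_comb (\<Delta>-{\<beta>}) \<beta>"
  proof (intro ballI notI)
    fix \<beta> assume \<beta>: "\<beta> \<in> \<Delta>" "nonneg_comb (\<Delta>-{\<beta>}) \<beta>"
    hence "gen (\<Delta>-{\<beta>})" using \<Delta> nonneg_comb_remove[OF fin] unfolding gen_def by blast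
    thus False using least card_Diff1_less[OF fin \<beta>(1)] by fastforce
  qed
  have "\<forall>\<delta>\<in>\<Delta>. inner e \<delta> > 0" using \<Delta>_pos e by (auto simp: pos_def)
  hence indep: "independent \<Delta>"
    using independent_if_pairwise_obtuse[OF fin] minimal_generating_set_obtuse[OF rs C e fin \<Delta>_pos]
      \<Delta> minimal unfolding gen_def by blast
  have "simple_system X \<Delta>" unfolding simple_system_def
  proof (intro conjI ballI)
    show "finite \<Delta>" "\<Delta> \<subseteq> X" "independent \<Delta>" using fin \<Delta>_pos indep by (auto simp: pos_def)
    fix \<alpha> assume \<alpha>: "\<alpha> \<in> X"
    from Ch_inner_sign[OF C \<alpha>]
    show "\<exists>c. \<alpha> = (\<Sum>\<delta>\<in>\<Delta>. c \<delta> *\<^sub>R \<delta>) \<and> ((\<forall>\<delta>\<in>\<Delta>. 0 \<le> c \<delta>) \<or> (\<forall>\<delta>\<in>\<Delta>. c \<delta> \<le> 0))"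
    proof
      assume "\<forall>e\<in>C. 0 < inner e \<alpha>"
      hence "\<alpha> \<in> pos X C" using \<alpha> by (auto simp: pos_def)
      thus ?thesis using \<Delta> gen_def nonneg_comb_def by metis
    next
      assume "\<forall>e\<in>C. inner e \<alpha> < 0"
      hence "- \<alpha> \<in> pos X C" using root_system_uminus[OF rs \<alpha>] by (auto simp: pos_def)
      then obtain d where d: "- \<alpha> = (\<Sum>\<delta>\<in>\<Delta>. d \<delta> *\<^sub>R \<delta>)" "\<forall>\<delta>\<in>\<Delta>. d \<delta> \<ge> 0"
        using \<Delta> gen_def nonneg_comb_def by blast
      have "\<alpha> = (\<Sum>\<delta>\<in>\<Delta>. (- d \<delta>) *\<^sub>R \<delta>)" using d(1) by (simp add: sum_negf) (metis minus_minus)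
      thus ?thesis using d(2) by (intro exI[of _ "\<lambda>\<delta>. - d \<delta>"]) auto
    qed
  qed
  thus ?thesis using \<Delta>_pos by blast
qed

lemma simple_system_nonneg_coeffs:
  assumes "simple_system X S" "S \<subseteq> pos X C" "\<alpha> \<in> X" "e \<in> C" "inner e \<alpha> > 0"
  shows "nonneg_comb S \<alpha>"
proof -
  obtain c where c: "\<alpha> = (\<Sum>s\<in>S. c s *\<^sub>R s)" "(\<forall>s\<in>S. c s \<ge> 0) \<or> (\<forall>s\<in>S. c s \<le> 0)"
    using assms(1,3) unfolding simple_system_def by blast
  have "\<not> (\<forall>s\<in>S. c s \<le> 0) \<or> (\<forall>s\<in>S. c s \<ge> 0)"
  proof (rule ccontr)
    assume nonpos: "\<not> ?thesis"
    have "inner e \<alpha> = (\<Sum>s\<in>S. c s * inner e s)" using c(1) by (simp add: inner_sum_right)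
    also have "\<dots> \<le> 0"
    proof (intro sum_nonpos)
      fix s assume "s \<in> S"
      hence "c s \<le> 0" "inner e s \<ge> 0" using nonpos assms(2,4) by (auto simp: pos_def less_imp_le)
      thus "c s * inner e s \<le> 0" by (rule mult_nonpos_nonneg)
    qed
    finally show False using assms(5) by simp
  qed
  thus ?thesis using c unfolding nonneg_comb_def by blast
qed

lemma independent_coeffs_unique:
  assumes "finite S" "independent S" "(\<Sum>t\<in>S. a t *\<^sub>R t) = (\<Sum>t\<in>S. b t *\<^sub>R t)" "t \<in> S"
  shows "a t = b t"
proof (rule ccontr)
  assume "a t \<noteq> b t"
  moreover have "(\<Sum>t\<in>S. (a t - b t) *\<^sub>R t) = 0"
    using assms(3) by (simp add: scaleR_diff_left sum_subtractf)
  ultimately have "dependent S" using assms(4) unfolding dependent_finite[OF assms(1)]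
    by (intro exI[of _ "\<lambda>t. a t - b t"]) auto
  thus False using assms(2) by simp
qed

lemma root_positive_multiple_eq:
  assumes "root_system X" "\<alpha> \<in> X" "l *\<^sub>R \<alpha> \<in> X" "inner e \<alpha> > 0" "inner e (l *\<^sub>R \<alpha>) > 0"
  shows "l *\<^sub>R \<alpha> = \<alpha>"
proof -
  have "l = 1 \<or> l = -1" using assms(1-3) unfolding root_system_def by blast
  thus ?thesis using assms(4,5) by auto
qed

text \<open>Each \<open>s'\<close> of \<open>S'\<close> is a nonnegative combination of \<open>S\<close>, whose members are nonnegative
  combinations of \<open>S'\<close>; by independence of \<open>S'\<close> every \<open>s\<close> of \<open>S\<close> occurring in the first combination
  is a multiple of \<open>s'\<close>, hence equal to it.\<close>
lemma simple_system_subset: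
  assumes rs: "root_system X" and e: "e \<in> C"
    and S: "simple_system X S" "S \<subseteq> pos X C" and S': "simple_system X S'" "S' \<subseteq> pos X C"
  shows "S' \<subseteq> S"
proof
  fix s' assume s': "s' \<in> S'"
  have fin: "finite S" "finite S'" and indep: "independent S'" and SX: "S \<subseteq> X" "S' \<subseteq> X"
    using S S' simple_system_def by blast+
  have e_pos: "x \<in> pos X C \<Longrightarrow> inner e x > 0" for x using e by (auto simp: pos_def)
  have "nonneg_comb S s'"
    using simple_system_nonneg_coeffs[OF S _ e] s' SX(2) S'(2) e_pos by blast
  then obtain c where c: "s' = (\<Sum>s\<in>S. c s *\<^sub>R s)" "\<forall>s\<in>S. c s \<ge> 0"
    unfolding nonneg_comb_def by blast
  have "\<forall>s\<in>S. nonneg_comb S' s"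
    using simple_system_nonneg_coeffs[OF S' _ e] SX(1) S(2) e_pos by blast
  then obtain d where d: "\<And>s. s \<in> S \<Longrightarrow> (\<Sum>t\<in>S'. d s t *\<^sub>R t) = s \<and> (\<forall>t\<in>S'. d s t \<ge> 0)"
    unfolding nonneg_comb_def by metis
  have "(\<Sum>t\<in>S'. (if t = s' then 1 else 0) *\<^sub>R t) = s'"
    using sum_if_eq_scaleR[OF fin(2) s', of 1] by simp
  also have "\<dots> = (\<Sum>s\<in>S. c s *\<^sub>R (\<Sum>t\<in>S'. d s t *\<^sub>R t))"
    unfolding c(1) using d by (intro sum.cong) auto
  also have "\<dots> = (\<Sum>t\<in>S'. (\<Sum>s\<in>S. c s * d s t) *\<^sub>R t)"
    by (simp add: scaleR_sum_right scaleR_sum_left sum.swap[of _ S'])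
  finally have coeff: "(if t = s' then 1 else 0) = (\<Sum>s\<in>S. c s * d s t)" if "t \<in> S'" for t
    by (rule independent_coeffs_unique[OF fin(2) indep _ that])
  have "s' \<noteq> 0" using s' SX rs root_system_def by blast
  then obtain s0 where s0: "s0 \<in> S" "c s0 \<noteq> 0"
    using c(1) sum.neutral[of S "\<lambda>s. c s *\<^sub>R s"] by auto
  hence "c s0 > 0" using c(2) by (simp add: order_less_le)
  have "d s0 t = 0" if t: "t \<in> S'" "t \<noteq> s'" for t
  proof -
    have "\<forall>s\<in>S. c s * d s t = 0"
      using coeff[OF t(1), symmetric] t(2) c(2) d t(1) by (subst sum_nonneg_eq_0_iff[OF fin(1), symmetric]) auto
    thus ?thesis using s0(1) \<open>c s0 > 0\<close> by fastforce
  qed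
  hence "(\<Sum>t\<in>S'. d s0 t *\<^sub>R t) = d s0 s' *\<^sub>R s'"
    using sum.remove[OF fin(2) s', of "\<lambda>t. d s0 t *\<^sub>R t"] by (simp add: sum.neutral)
  hence s0_eq: "s0 = d s0 s' *\<^sub>R s'" using d[OF s0(1)] by simp
  have "s' \<in> X" "s0 \<in> X" "inner e s' > 0" "inner e s0 > 0"
    using s0(1) s' SX S(2) S'(2) e_pos by auto
  hence "d s0 s' *\<^sub>R s' = s'" using root_positive_multiple_eq[OF rs] s0_eq by metis
  thus "s' \<in> S" using s0(1) s0_eq by simp
qed

lemma simple_system_simple:
  assumes "root_system X" "C \<in> Ch X"
  shows "simple_system X (simple X C)" "simple X C \<subseteq> pos X C"
proof -
  obtain S where S: "simple_system X S" "S \<subseteq> pos X C" using simple_system_exists[OF assms] by blast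
  obtain e where "e \<in> C" using Ch_nonempty[OF assms(2)] by blast
  hence "simple X C = S" unfolding simple_def
    using S simple_system_subset[OF assms(1)] by (intro the_equality) blast+
  thus "simple_system X (simple X C)" "simple X C \<subseteq> pos X C" using S by simp_all
qed

lemma root_system_subsystem: "root_system \<Phi> \<Longrightarrow> root_subsystem \<Phi> \<Psi> \<Longrightarrow> root_system \<Psi>"
  unfolding root_system_def root_subsystem_def by (meson finite_subset subsetD)

lemma lifts_ch_pos:
  assumes rs: "root_system \<Phi>" and sub: "root_subsystem \<Phi> \<Psi>" and D: "D \<in> Ch \<Phi>" and C: "C \<in> Ch \<Phi>"
    and lift: "lifts_ch \<Phi> \<Psi> D (restr \<Psi> C)" and \<beta>: "\<beta> \<in> \<Psi>"
    and pos_C: "\<forall>e\<in>restr \<Psi> C. inner e \<beta> > 0" and e: "e \<in> D"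
  shows "inner e \<beta> > 0"
proof -
  have \<Psi>\<Phi>: "\<Psi> \<subseteq> \<Phi>" using sub root_subsystem_def by blast
  define C' where "C' = restr \<Psi> C"
  have C': "C' \<in> Ch \<Psi>" using restr_in_Ch[OF \<Psi>\<Phi> C] C'_def by blast
  obtain e0 where e0: "e0 \<in> C'" using Ch_nonempty[OF C'] by blast
  note S = simple_system_simple[OF root_system_subsystem[OF rs sub] C']
  obtain c where c: "\<beta> = (\<Sum>s\<in>simple \<Psi> C'. c s *\<^sub>R s)" "\<forall>s\<in>simple \<Psi> C'. c s \<ge> 0"
    using simple_system_nonneg_coeffs[OF S \<beta> e0] pos_C e0 unfolding C'_def nonneg_comb_def by blast
  have simple_pos_D: "simple \<Psi> C' \<subseteq> pos \<Phi> D"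
    using lift simple_system_simple(2)[OF rs D] unfolding C'_def lifts_ch_def by blast
  have "0 \<le> (\<Sum>s\<in>simple \<Psi> C'. c s * inner e s)"
    using simple_pos_D e c(2) by (intro sum_nonneg) (auto simp: pos_def less_imp_le)
  also have "\<dots> = inner e \<beta>" using c(1) by (simp add: inner_sum_right)
  finally show ?thesis using Ch_inner_nonzero[OF D _ e] \<beta> \<Psi>\<Phi> by fastforce
qed

lemma lifts_ch_not_separates:
  assumes rs: "root_system \<Phi>" and sub: "root_subsystem \<Phi> \<Psi>" and D: "D \<in> Ch \<Phi>" and C: "C \<in> Ch \<Phi>"
    and lift: "lifts_ch \<Phi> \<Psi> D (restr \<Psi> C)" and \<beta>: "\<beta> \<in> \<Psi>"
  shows "\<not> separates (hyp \<beta>) D C"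
proof
  assume "separates (hyp \<beta>) D C"
  then obtain u where u: "hyp \<beta> = hyp u" "\<forall>x\<in>D. inner x u > 0" "\<forall>y\<in>C. inner y u < 0"
    unfolding separates_def by blast
  have \<Psi>\<Phi>: "\<Psi> \<subseteq> \<Phi>" using sub root_subsystem_def by blast
  have "\<beta> \<noteq> 0" using \<beta> \<Psi>\<Phi> rs root_system_def by blast
  then obtain t where u_eq: "u = t *\<^sub>R \<beta>" using hyp_subset_imp_parallel u(1) by (metis order_refl)
  have C': "restr \<Psi> C \<in> Ch \<Psi>" "C \<subseteq> restr \<Psi> C" using restr_in_Ch[OF \<Psi>\<Phi> C] by blast+
  obtain e where e: "e \<in> D" using Ch_nonempty[OF D] by blast
  obtain x where x: "x \<in> C" using Ch_nonempty[OF C] by blast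
  have te: "t * inner e \<beta> > 0" and tx: "t * inner x \<beta> < 0" using u(2,3) e x u_eq by auto
  have "- \<beta> \<in> \<Psi>" using sub \<beta> refl_self[OF \<open>\<beta> \<noteq> 0\<close>] unfolding root_subsystem_def by metis
  from Ch_inner_sign[OF C'(1) \<beta>] show False
  proof
    assume pos: "\<forall>e\<in>restr \<Psi> C. 0 < inner e \<beta>"
    hence "inner e \<beta> > 0" using lifts_ch_pos[OF rs sub D C lift \<beta> _ e] by blast
    moreover have "inner x \<beta> > 0" using pos x C'(2) by blast
    ultimately show False using te tx by (simp add: zero_less_mult_iff mult_less_0_iff)
  next
    assume neg: "\<forall>e\<in>restr \<Psi> C. inner e \<beta> < 0"
    hence "inner e (- \<beta>) > 0" using lifts_ch_pos[OF rs sub D C lift \<open>- \<beta> \<in> \<Psi>\<close> _ e] by simp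
    moreover have "inner x \<beta> < 0" using neg x C'(2) by blast
    ultimately show False using te tx by (simp add: zero_less_mult_iff mult_less_0_iff)
  qed
qed

section \<open>Galleries and their lifts\<close>

lemma
  assumes "length (fst \<Gamma>) = Suc (glen \<Gamma>)" "a \<le> b" "b \<le> glen \<Gamma>"
  shows glen_subgallery: "glen (subgallery \<Gamma> a b) = b - a"
    and chamber_subgallery: "j \<le> b - a \<Longrightarrow> chamber (subgallery \<Gamma> a b) j = chamber \<Gamma> (a + j)"
    and wall_subgallery: "j \<in> {1..b - a} \<Longrightarrow> wall (subgallery \<Gamma> a b) j = wall \<Gamma> (a + j)"
  using assms by (auto simp: glen_def subgallery_def chamber_def wall_def nth_take nth_drop)

lemma is_gallery_subgallery:
  assumes "is_gallery X \<Gamma>" "a \<le> b" "b \<le> glen \<Gamma>"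
  shows "is_gallery X (subgallery \<Gamma> a b)"
proof -
  have len: "length (fst \<Gamma>) = Suc (glen \<Gamma>)" using assms(1) is_gallery_def by blast
  note sub = glen_subgallery[OF len assms(2,3)] chamber_subgallery[OF len assms(2,3)]
    wall_subgallery[OF len assms(2,3)]
  show ?thesis unfolding is_gallery_def sub(1)
  proof (intro conjI allI impI ballI)
    show "length (fst (subgallery \<Gamma> a b)) = Suc (b - a)"
      using len assms(2,3) by (simp add: subgallery_def glen_def)
    fix j
    show "j \<le> b - a \<Longrightarrow> chamber (subgallery \<Gamma> a b) j \<in> Ch X"
      using assms sub(2) unfolding is_gallery_def by auto
    assume j: "j \<in> {1..b - a}"
    have "a + j \<in> {1..glen \<Gamma>}" "a + j - 1 = a + (j - 1)" using j assms(3) by auto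
    thus "\<exists>\<alpha>\<in>X. wall (subgallery \<Gamma> a b) j = hyp \<alpha>"
      "connected_through (chamber (subgallery \<Gamma> a b) (j - 1)) (chamber (subgallery \<Gamma> a b) j)
         (wall (subgallery \<Gamma> a b) j)"
      using assms(1) j sub(2,3) unfolding is_gallery_def by auto
  qed
qed

lemma sorted_list_of_set_strict_mono_on:
  assumes "strict_mono_on {1..n} q" "q ` {1..n} = A"
  shows "sorted_list_of_set A = map q [1..<Suc n]"
proof -
  have "sorted_wrt (<) (map q [1..<Suc n])"
    unfolding sorted_wrt_iff_nth_less using assms(1)
    by (auto simp: strict_mono_on_def simp del: upt_Suc)
  moreover have "set (map q [1..<Suc n]) = A" using assms(2) by auto
  ultimately show ?thesis using sorted_list_of_set.idem_if_sorted_distinct strict_sorted_iff by metis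
qed

lemma
  assumes "lifts \<Phi> \<Psi> \<Delta> (grestr \<Psi> G)"
    and "strict_mono_on {1..glen \<Delta>} q" "q ` {1..glen \<Delta>} = Iset \<Psi> G"
  shows wall_lifts_grestr: "j \<in> {1..glen \<Delta>} \<Longrightarrow> wall \<Delta> j = wall G (q j)"
    and chamber_lifts_grestr: "j \<le> glen \<Delta> \<Longrightarrow>
      lifts_ch \<Phi> \<Psi> (chamber \<Delta> j) (restr \<Psi> (chamber G (if j = 0 then 0 else q j)))"
proof -
  let ?idx = "map q [1..<Suc (glen \<Delta>)]"
  have grestr: "grestr \<Psi> G = (map (\<lambda>j. restr \<Psi> (chamber G j)) (0 # ?idx), map (wall G) ?idx)"
    unfolding grestr_def sorted_list_of_set_strict_mono_on[OF assms(2,3)] by simp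
  have idx: "(0 # ?idx) ! j = (if j = 0 then 0 else q j)" if "j \<le> glen \<Delta>" for j
    using that by (cases j) (auto simp del: upt_Suc)
  show "wall \<Delta> j = wall G (q j)" if "j \<in> {1..glen \<Delta>}"
  proof -
    have "snd \<Delta> = map (wall G) ?idx" using assms(1) unfolding lifts_def grestr by simp
    moreover have "map (wall G) ?idx ! (j - 1) = wall G (q j)" using that by (auto simp del: upt_Suc)
    ultimately show ?thesis by (simp add: wall_def[of \<Delta>] del: upt_Suc)
  qed
  show "lifts_ch \<Phi> \<Psi> (chamber \<Delta> j) (restr \<Psi> (chamber G (if j = 0 then 0 else q j)))"
    if "j \<le> glen \<Delta>"
  proof -
    have "map (\<lambda>j. restr \<Psi> (chamber G j)) (0 # ?idx) ! j
        = restr \<Psi> (chamber G (if j = 0 then 0 else q j))"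
      using that idx[OF that] by (subst nth_map) (auto simp del: upt_Suc)
    moreover have "lifts_ch \<Phi> \<Psi> (chamber \<Delta> j) (chamber (grestr \<Psi> G) j)"
      using assms(1) that unfolding lifts_def grestr by simp
    ultimately show ?thesis unfolding grestr by (simp add: chamber_def[of "(_, _)"] del: upt_Suc)
  qed
qed

text \<open>The \<open>j\<close>-th wall condition of a \<open>p\<close>-pair and the \<open>j\<close>-th entries of its sign and cosign,
  for \<open>p j = m\<close>.\<close>
definition positive_entry :: "'a::euclidean_space gallery \<Rightarrow> 'a gallery \<Rightarrow> nat \<Rightarrow> nat \<Rightarrow> bool" where
  "positive_entry \<Delta> \<Gamma> j m \<longleftrightarrow> wall \<Gamma> m = wall \<Delta> j
     \<and> \<not> separates (wall \<Delta> j) (chamber \<Delta> j) (chamber \<Gamma> m)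
     \<and> \<not> separates (wall \<Delta> j) (chamber \<Delta> (j - 1)) (chamber \<Gamma> (m - 1))"

lemma ppair_positive_if_positive_entries:
  assumes "strict_mono_on {1..glen \<Delta>} p" "p ` {1..glen \<Delta>} \<subseteq> {1..glen \<Gamma>}"
    and "\<forall>j\<in>{1..glen \<Delta>}. positive_entry \<Delta> \<Gamma> j (p j)"
  shows "ppair \<Delta> \<Gamma> p \<and> positive_sign \<Delta> \<Gamma> p \<and> positive_cosign \<Delta> \<Gamma> p"
  using assms unfolding ppair_def positive_sign_def positive_cosign_def positive_entry_def by blast

lemma strict_mono_on_no_value_between:
  fixes q :: "nat \<Rightarrow> 'b::order"
  assumes "strict_mono_on {1..n} q" "t \<in> {1..n}" "Suc i \<le> n" "1 \<le> i \<Longrightarrow> q i < q t"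
  shows "q (Suc i) \<le> q t"
proof (cases "Suc i \<le> t")
  case True
  thus ?thesis using assms(2,3) by (intro strict_mono_on_leD[OF assms(1)]) auto
next
  case False
  hence "1 \<le> i" "t \<le> i" using assms(2) by auto
  moreover have "q t \<le> q i" using \<open>t \<le> i\<close> assms(2,3) by (intro strict_mono_on_leD[OF assms(1)]) auto
  ultimately show ?thesis using assms(4) by simp
qed

text \<open>The sign entry holds because \<open>chamber \<Delta> j\<close> lifts the \<open>\<Psi>\<close>-chamber of \<open>chamber G (q j)\<close>; the
  cosign entry because \<open>chamber \<Delta> (j - 1)\<close> lifts the \<open>\<Psi>\<close>-chamber of \<open>chamber G (q (j - 1))\<close>, which
  is the one of \<open>chamber G (q j - 1)\<close> as no wall of \<open>\<Psi>\<close> is crossed in between.\<close>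
lemma lifts_grestr_positive_entry:
  assumes rs: "root_system \<Phi>" and sub: "root_subsystem \<Phi> \<Psi>"
    and G: "is_gallery \<Phi> G" and \<Delta>: "is_gallery \<Phi> \<Delta>" and lift: "lifts \<Phi> \<Psi> \<Delta> (grestr \<Psi> G)"
    and q: "strict_mono_on {1..glen \<Delta>} q" "q ` {1..glen \<Delta>} = Iset \<Psi> G"
    and j: "j \<in> {1..glen \<Delta>}"
  shows "positive_entry \<Delta> G j (q j)"
proof -
  have \<Psi>\<Phi>: "\<Psi> \<subseteq> \<Phi>" using sub root_subsystem_def by blast
  have "q j \<in> Iset \<Psi> G" using q(2) j by blast
  then obtain \<beta> where \<beta>: "\<beta> \<in> \<Psi>" "wall G (q j) = hyp \<beta>" and qj: "q j \<in> {1..glen G}"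
    unfolding Iset_def by blast
  have wall_eq: "wall \<Delta> j = hyp \<beta>" using wall_lifts_grestr[OF lift q j] \<beta>(2) by simp
  have Ch_\<Delta>: "chamber \<Delta> j \<in> Ch \<Phi>" "chamber \<Delta> (j - 1) \<in> Ch \<Phi>"
    and Ch_G: "chamber G (q j) \<in> Ch \<Phi>" "chamber G (q j - 1) \<in> Ch \<Phi>"
    using \<Delta> G j qj unfolding is_gallery_def by auto
  have "lifts_ch \<Phi> \<Psi> (chamber \<Delta> j) (restr \<Psi> (chamber G (q j)))"
    using chamber_lifts_grestr[OF lift q, of j] j by simp
  hence sign: "\<not> separates (hyp \<beta>) (chamber \<Delta> j) (chamber G (q j))"
    by (rule lifts_ch_not_separates[OF rs sub Ch_\<Delta>(1) Ch_G(1) _ \<beta>(1)])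
  define q0 where "q0 = (if j - 1 = 0 then 0 else q (j - 1))"
  have "q0 < q j"
    using qj j by (auto simp: q0_def intro!: strict_mono_onD[OF q(1)])
  have no_wall: "\<forall>\<beta>\<in>\<Psi>. wall G m \<noteq> hyp \<beta>" if m: "q0 < m" "m \<le> q j - 1" for m
  proof (intro ballI notI)
    fix \<gamma> assume "\<gamma> \<in> \<Psi>" "wall G m = hyp \<gamma>"
    hence "m \<in> Iset \<Psi> G" using m qj unfolding Iset_def by auto
    then obtain t where t: "t \<in> {1..glen \<Delta>}" "m = q t" using q(2) by (metis imageE)
    have "q (Suc (j - 1)) \<le> q t"
      using m(1) t j unfolding q0_def
      by (intro strict_mono_on_no_value_between[OF q(1)]) (auto split: if_splits)
    thus False using m(2) t(2) j qj by auto
  qed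
  have "restr \<Psi> (chamber G q0) = restr \<Psi> (chamber G (q j - 1))"
    using \<open>q0 < q j\<close> qj no_wall by (intro restr_eq_along_gallery[OF rs \<Psi>\<Phi> G]) auto
  moreover have "lifts_ch \<Phi> \<Psi> (chamber \<Delta> (j - 1)) (restr \<Psi> (chamber G q0))"
    using chamber_lifts_grestr[OF lift q, of "j - 1"] j unfolding q0_def by auto
  ultimately have cosign: "\<not> separates (hyp \<beta>) (chamber \<Delta> (j - 1)) (chamber G (q j - 1))"
    using lifts_ch_not_separates[OF rs sub Ch_\<Delta>(2) Ch_G(2) _ \<beta>(1)] by simp
  show ?thesis
    unfolding positive_entry_def using wall_eq \<beta>(2) sign cosign by simp
qed

lemma positive_entry_subgallery:
  assumes "length (fst \<Gamma>) = Suc (glen \<Gamma>)" "a \<le> b" "b \<le> glen \<Gamma>" "m \<in> {1..b - a}"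
    and "positive_entry \<Delta> (subgallery \<Gamma> a b) j m"
  shows "positive_entry \<Delta> \<Gamma> j (a + m)"
proof -
  have "chamber (subgallery \<Gamma> a b) m = chamber \<Gamma> (a + m)"
    "chamber (subgallery \<Gamma> a b) (m - 1) = chamber \<Gamma> (a + m - 1)"
    "wall (subgallery \<Gamma> a b) m = wall \<Gamma> (a + m)"
    using chamber_subgallery[OF assms(1-3), of m] chamber_subgallery[OF assms(1-3), of "m - 1"]
      wall_subgallery[OF assms(1-3) assms(4)] assms(4) by auto
  thus ?thesis using assms(5) unfolding positive_entry_def by simp
qed

lemma glen_gappend: "glen (gappend \<Gamma> \<Delta>) = glen \<Gamma> + glen \<Delta>"
  by (simp add: glen_def gappend_def)

lemma length_fst_gappend:
  "length (fst \<Gamma>) = Suc (glen \<Gamma>) \<Longrightarrow> length (fst \<Delta>) = Suc (glen \<Delta>)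
    \<Longrightarrow> length (fst (gappend \<Gamma> \<Delta>)) = Suc (glen (gappend \<Gamma> \<Delta>))"
  by (simp add: gappend_def glen_def)

lemma chamber_gappend_left:
  "length (fst \<Gamma>) = Suc (glen \<Gamma>) \<Longrightarrow> j \<le> glen \<Gamma> \<Longrightarrow> chamber (gappend \<Gamma> \<Delta>) j = chamber \<Gamma> j"
  by (simp add: chamber_def gappend_def nth_append)

lemma chamber_gappend_right:
  assumes "length (fst \<Gamma>) = Suc (glen \<Gamma>)" "final_ch \<Gamma> = init_ch \<Delta>" "j < length (fst \<Delta>)"
  shows "chamber (gappend \<Gamma> \<Delta>) (glen \<Gamma> + j) = chamber \<Delta> j"
proof (cases j)
  case 0
  thus ?thesis using assms chamber_gappend_left[OF assms(1)] by (simp add: final_ch_def init_ch_def)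
next
  case (Suc i)
  thus ?thesis using assms by (simp add: chamber_def gappend_def nth_append nth_tl)
qed

lemma wall_gappend_left: "j \<in> {1..glen \<Gamma>} \<Longrightarrow> wall (gappend \<Gamma> \<Delta>) j = wall \<Gamma> j"
  by (auto simp: wall_def gappend_def nth_append glen_def)

lemma wall_gappend_right: "1 \<le> j \<Longrightarrow> wall (gappend \<Gamma> \<Delta>) (glen \<Gamma> + j) = wall \<Delta> j"
  by (auto simp: wall_def gappend_def nth_append glen_def)

lemma gconcat_blocks:
  assumes "\<forall>\<Delta>\<in>set \<Delta>s. length (fst \<Delta>) = Suc (glen \<Delta>)"
    and "\<forall>n. Suc n < length \<Delta>s \<longrightarrow> final_ch (\<Delta>s ! n) = init_ch (\<Delta>s ! Suc n)"
  shows "glen (gconcat \<Delta>s) = (\<Sum>n<length \<Delta>s. glen (\<Delta>s ! n))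
    \<and> (\<Delta>s \<noteq> [] \<longrightarrow> length (fst (gconcat \<Delta>s)) = Suc (glen (gconcat \<Delta>s)))
    \<and> (\<forall>n<length \<Delta>s. \<forall>j\<le>glen (\<Delta>s ! n).
         chamber (gconcat \<Delta>s) ((\<Sum>m<n. glen (\<Delta>s ! m)) + j) = chamber (\<Delta>s ! n) j)
    \<and> (\<forall>n<length \<Delta>s. \<forall>j\<in>{1..glen (\<Delta>s ! n)}.
         wall (gconcat \<Delta>s) ((\<Sum>m<n. glen (\<Delta>s ! m)) + j) = wall (\<Delta>s ! n) j)"
  using assms
proof (induction \<Delta>s rule: gconcat.induct)
  case (3 \<Gamma> \<Delta> \<Delta>s)
  let ?Ds = "\<Delta> # \<Delta>s"
  define R where "R = gconcat ?Ds"
  define off where "off n = (\<Sum>m<n. glen (?Ds ! m))" for n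
  have wf: "\<forall>D\<in>set ?Ds. length (fst D) = Suc (glen D)" using "3.prems"(1) by simp
  have adj: "\<forall>n. Suc n < length ?Ds \<longrightarrow> final_ch (?Ds ! n) = init_ch (?Ds ! Suc n)"
    using "3.prems"(2) by (metis Suc_less_eq length_Cons nth_Cons_Suc)
  have IH: "glen R = off (length ?Ds)" "length (fst R) = Suc (glen R)"
    "\<And>n j. n < length ?Ds \<Longrightarrow> j \<le> glen (?Ds ! n) \<Longrightarrow> chamber R (off n + j) = chamber (?Ds ! n) j"
    "\<And>n j. n < length ?Ds \<Longrightarrow> j \<in> {1..glen (?Ds ! n)} \<Longrightarrow> wall R (off n + j) = wall (?Ds ! n) j"
    using "3.IH"[OF wf adj] unfolding R_def off_def by blast+
  have \<Gamma>: "length (fst \<Gamma>) = Suc (glen \<Gamma>)" and join: "final_ch \<Gamma> = init_ch R"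
    using "3.prems" IH(3)[of 0 0] by (auto simp: off_def init_ch_def)
  have off_Suc: "(\<Sum>m<Suc n. glen ((\<Gamma> # ?Ds) ! m)) = glen \<Gamma> + off n" for n
    unfolding off_def by (subst sum.lessThan_Suc_shift) simp
  have in_R: "off n + j < length (fst R)" if "n < length ?Ds" "j \<le> glen (?Ds ! n)" for n j
  proof -
    have "off n + glen (?Ds ! n) = off (Suc n)" by (simp add: off_def)
    also have "\<dots> \<le> off (length ?Ds)" using that(1) unfolding off_def by (intro sum_mono2) auto
    finally have "off n + glen (?Ds ! n) \<le> off (length ?Ds)" .
    thus ?thesis using that(2) IH(1,2) by simp
  qed
  have G: "gconcat (\<Gamma> # ?Ds) = gappend \<Gamma> R" by (simp add: R_def)
  show ?case unfolding G
  proof (intro conjI impI allI ballI)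
    show "glen (gappend \<Gamma> R) = (\<Sum>n<length (\<Gamma> # ?Ds). glen ((\<Gamma> # ?Ds) ! n))"
      unfolding glen_gappend IH(1) length_Cons off_Suc ..
    show "length (fst (gappend \<Gamma> R)) = Suc (glen (gappend \<Gamma> R))"
      by (rule length_fst_gappend[OF \<Gamma> IH(2)])
  next
    fix n j assume n: "n < length (\<Gamma> # ?Ds)" and j: "j \<le> glen ((\<Gamma> # ?Ds) ! n)"
    show "chamber (gappend \<Gamma> R) ((\<Sum>m<n. glen ((\<Gamma> # ?Ds) ! m)) + j) = chamber ((\<Gamma> # ?Ds) ! n) j"
    proof (cases n)
      case 0 thus ?thesis using j chamber_gappend_left[OF \<Gamma>] by simp
    next
      case (Suc n')
      thus ?thesis
        using n j off_Suc chamber_gappend_right[OF \<Gamma> join in_R] IH(3) by (simp add: add.assoc)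
    qed
  next
    fix n j assume n: "n < length (\<Gamma> # ?Ds)" and j: "j \<in> {1..glen ((\<Gamma> # ?Ds) ! n)}"
    show "wall (gappend \<Gamma> R) ((\<Sum>m<n. glen ((\<Gamma> # ?Ds) ! m)) + j) = wall ((\<Gamma> # ?Ds) ! n) j"
    proof (cases n)
      case 0 thus ?thesis using j wall_gappend_left by simp
    next
      case (Suc n')
      moreover have "1 \<le> off n' + j" using j by simp
      ultimately show ?thesis
        using n j off_Suc wall_gappend_right[of "off n' + j" \<Gamma> R] IH(4) by (simp add: add.assoc)
    qed
  qed
qed (auto simp: glen_def)

lemma index_in_block:
  fixes g :: "nat \<Rightarrow> nat"
  assumes "j \<in> {1..(\<Sum>m<k. g m)}"
  shows "\<exists>l<k. \<exists>j'\<in>{1..g l}. j = (\<Sum>m<l. g m) + j'"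
  using assms
proof (induction k)
  case (Suc k)
  show ?case
  proof (cases "j \<le> (\<Sum>m<k. g m)")
    case True thus ?thesis using Suc by (meson atLeastAtMost_iff less_SucI)
  next
    case False
    thus ?thesis using Suc.prems by (intro exI[of _ k] conjI bexI[of _ "j - (\<Sum>m<k. g m)"]) auto
  qed
qed simp

lemma sum_lessThan_mono: "(l::nat) \<le> l' \<Longrightarrow> (\<Sum>m<l. g m) \<le> (\<Sum>m<l'. (g m :: nat))"
  by (rule sum_mono2) auto

lemma bounded_Suc_mono_le:
  fixes i :: "nat \<Rightarrow> 'b::order"
  shows "\<forall>l<k. i l \<le> i (Suc l) \<Longrightarrow> l \<le> l' \<Longrightarrow> l' \<le> k \<Longrightarrow> i l \<le> i l'"
  by (rule lift_Suc_mono_le_ivl[of "{..<k}"]) auto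

lemma strict_mono_on_blocks:
  fixes g i :: "nat \<Rightarrow> nat" and q :: "nat \<Rightarrow> nat \<Rightarrow> nat"
  assumes i: "\<forall>l<k. i l \<le> i (Suc l)"
    and q: "\<forall>l<k. strict_mono_on {1..g l} (q l) \<and> q l ` {1..g l} \<subseteq> {1..i (Suc l) - i l}"
    and p: "\<forall>l<k. \<forall>j\<in>{1..g l}. p ((\<Sum>m<l. g m) + j) = i l + q l j"
  shows "strict_mono_on {1..(\<Sum>m<k. g m)} p \<and> p ` {1..(\<Sum>m<k. g m)} \<subseteq> {i 0<..i k}"
proof -
  let ?s = "\<lambda>l. \<Sum>m<l. g m"
  have i_mono: "i l \<le> i l'" if "l \<le> l'" "l' \<le> k" for l l'
    using i that by (rule bounded_Suc_mono_le)
  have in_block: "p (?s l + j) \<in> {i l<..i (Suc l)}" if "l < k" "j \<in> {1..g l}" for l j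
  proof -
    have "q l j \<in> {1..i (Suc l) - i l}" using q that by blast
    thus ?thesis using p that by auto
  qed
  have block: "\<exists>l<k. \<exists>j'\<in>{1..g l}. j = ?s l + j'" if "j \<in> {1..?s k}" for j
    using index_in_block that .
  show ?thesis
  proof
    show "strict_mono_on {1..?s k} p"
    proof (rule strict_mono_onI)
      fix x y assume "x \<in> {1..?s k}" "y \<in> {1..?s k}" "x < y"
      then obtain l l' x' y' where l: "l < k" "x' \<in> {1..g l}" "x = ?s l + x'"
        and l': "l' < k" "y' \<in> {1..g l'}" "y = ?s l' + y'"
        using block by meson
      consider "l = l'" | "l < l'" | "l' < l" by linarith
      thus "p x < p y"
      proof cases
        case 1
        hence "x' < y'" using l(3) l'(3) \<open>x < y\<close> by simp
        moreover have "strict_mono_on {1..g l} (q l)" using q l(1) by blast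
        ultimately have "q l x' < q l y'" using l(2) l'(2) 1 by (simp add: strict_mono_onD)
        thus ?thesis using p l l' 1 by simp
      next
        case 2
        hence "i (Suc l) \<le> i l'" using l'(1) by (intro i_mono) auto
        thus ?thesis using in_block[OF l(1,2)] in_block[OF l'(1,2)] l(3) l'(3) by auto
      next
        case 3
        hence "?s (Suc l') \<le> ?s l" by (intro sum_lessThan_mono) simp
        thus ?thesis using l l' \<open>x < y\<close> by simp
      qed
    qed
    show "p ` {1..?s k} \<subseteq> {i 0<..i k}"
    proof
      fix z assume "z \<in> p ` {1..?s k}"
      then obtain l j where "l < k" "j \<in> {1..g l}" "z = p (?s l + j)" using block by blast
      moreover from this have "i 0 \<le> i l" "i (Suc l) \<le> i k" using i_mono by auto
      ultimately show "z \<in> {i 0<..i k}" using in_block by fastforce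
    qed
  qed
qed

lemma positive_entry_gconcat:
  assumes "\<forall>\<Delta>\<in>set \<Delta>s. length (fst \<Delta>) = Suc (glen \<Delta>)"
    and "\<forall>n. Suc n < length \<Delta>s \<longrightarrow> final_ch (\<Delta>s ! n) = init_ch (\<Delta>s ! Suc n)"
    and "n < length \<Delta>s" "j \<in> {1..glen (\<Delta>s ! n)}" "positive_entry (\<Delta>s ! n) \<Gamma> j m"
  shows "positive_entry (gconcat \<Delta>s) \<Gamma> ((\<Sum>l<n. glen (\<Delta>s ! l)) + j) m"
proof -
  let ?o = "\<Sum>l<n. glen (\<Delta>s ! l)"
  note blocks = gconcat_blocks[OF assms(1,2)]
  have "chamber (gconcat \<Delta>s) (?o + j) = chamber (\<Delta>s ! n) j"
    "chamber (gconcat \<Delta>s) (?o + j - 1) = chamber (\<Delta>s ! n) (j - 1)"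
    "wall (gconcat \<Delta>s) (?o + j) = wall (\<Delta>s ! n) j"
    using blocks assms(3,4) by (auto simp del: Nat.add_diff_assoc simp: add_diff_assoc[symmetric])
  thus ?thesis using assms(5) unfolding positive_entry_def by simp
qed

lemma
  assumes "\<forall>l<k. length (fst (\<Delta> l)) = Suc (glen (\<Delta> l))"
    and "\<forall>l. Suc l < k \<longrightarrow> final_ch (\<Delta> l) = init_ch (\<Delta> (Suc l))"
  shows glen_gconcat_map: "glen (gconcat (map \<Delta> [0..<k])) = (\<Sum>l<k. glen (\<Delta> l))"
    and positive_entry_gconcat_map: "l < k \<Longrightarrow> j \<in> {1..glen (\<Delta> l)} \<Longrightarrow> positive_entry (\<Delta> l) \<Gamma> j m
      \<Longrightarrow> positive_entry (gconcat (map \<Delta> [0..<k])) \<Gamma> ((\<Sum>n<l. glen (\<Delta> n)) + j) m"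
proof -
  let ?\<Delta>s = "map \<Delta> [0..<k]"
  have offset: "(\<Sum>n<l. glen (?\<Delta>s ! n)) = (\<Sum>n<l. glen (\<Delta> n))" if "l \<le> k" for l
    using that by (intro sum.cong) auto
  have wf: "\<forall>D\<in>set ?\<Delta>s. length (fst D) = Suc (glen D)"
    and adj: "\<forall>n. Suc n < length ?\<Delta>s \<longrightarrow> final_ch (?\<Delta>s ! n) = init_ch (?\<Delta>s ! Suc n)"
    using assms by auto
  show "glen (gconcat ?\<Delta>s) = (\<Sum>l<k. glen (\<Delta> l))"
    using conjunct1[OF gconcat_blocks[OF wf adj]] offset[of k] by simp
  show "positive_entry (gconcat ?\<Delta>s) \<Gamma> ((\<Sum>n<l. glen (\<Delta> n)) + j) m"
    if "l < k" "j \<in> {1..glen (\<Delta> l)}" "positive_entry (\<Delta> l) \<Gamma> j m"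
    using positive_entry_gconcat[OF wf adj, of l j] that offset[of l] by simp
qed

lemma positive_entry_lifted_block:
  assumes rs: "root_system \<Phi>" and sub: "root_subsystem \<Phi> \<Psi>"
    and \<Gamma>: "is_gallery \<Phi> \<Gamma>" "a \<le> b" "b \<le> glen \<Gamma>"
    and \<Delta>: "is_gallery \<Phi> \<Delta>" and lift: "lifts \<Phi> \<Psi> \<Delta> (grestr \<Psi> (subgallery \<Gamma> a b))"
    and q: "strict_mono_on {1..glen \<Delta>} q" "q ` {1..glen \<Delta>} = Iset \<Psi> (subgallery \<Gamma> a b)"
    and j: "j \<in> {1..glen \<Delta>}"
  shows "q j \<in> {1..b - a} \<and> positive_entry \<Delta> \<Gamma> j (a + q j)"
proof -
  have len: "length (fst \<Gamma>) = Suc (glen \<Gamma>)" using \<Gamma>(1) is_gallery_def by blast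
  have "q j \<in> Iset \<Psi> (subgallery \<Gamma> a b)" using q(2) j by blast
  hence qj: "q j \<in> {1..b - a}" unfolding Iset_def glen_subgallery[OF len \<Gamma>(2,3)] by blast
  have "positive_entry \<Delta> (subgallery \<Gamma> a b) j (q j)"
    by (rule lifts_grestr_positive_entry[OF rs sub is_gallery_subgallery[OF \<Gamma>] \<Delta> lift q j])
  thus ?thesis using positive_entry_subgallery[OF len \<Gamma>(2,3) qj] qj by blast
qed

theorem mainTheorem9:
  fixes \<Phi> :: "'a::euclidean_space set"
    and \<Gamma> :: "'a gallery"
    and k :: nat
    and i :: "nat \<Rightarrow> nat"
    and \<Psi> :: "nat \<Rightarrow> 'a set"
    and \<Delta> :: "nat \<Rightarrow> 'a gallery"
    and pl :: "nat \<Rightarrow> nat \<Rightarrow> nat"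
    and p :: "nat \<Rightarrow> nat"
  assumes "root_system \<Phi>"
    and "is_gallery \<Phi> \<Gamma>"
    and "0 < k"
    and "i 0 = 0" and "\<forall>l<k. i l \<le> i (Suc l)" and "i k = glen \<Gamma>"
    and "\<forall>l<k. root_subsystem \<Phi> (\<Psi> l) \<and> saturated \<Phi> (\<Psi> l)"
    and "\<forall>l<k. is_gallery \<Phi> (\<Delta> l)
                \<and> lifts \<Phi> (\<Psi> l) (\<Delta> l) (grestr (\<Psi> l) (subgallery \<Gamma> (i l) (i (Suc l))))"
    and "\<forall>l. Suc l < k \<longrightarrow> final_ch (\<Delta> l) = init_ch (\<Delta> (Suc l))"
    and "\<forall>l<k. strict_mono_on {1..glen (\<Delta> l)} (pl l)
                \<and> pl l ` {1..glen (\<Delta> l)} = Iset (\<Psi> l) (subgallery \<Gamma> (i l) (i (Suc l)))"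
    and "\<forall>l<k. \<forall>j. (\<Sum>m<l. glen (\<Delta> m)) < j \<and> j \<le> (\<Sum>m\<le>l. glen (\<Delta> m))
                \<longrightarrow> p j = pl l (j - (\<Sum>m<l. glen (\<Delta> m))) + i l"
  shows "ppair (gconcat (map \<Delta> [0..<k])) \<Gamma> p
       \<and> positive_sign (gconcat (map \<Delta> [0..<k])) \<Gamma> p
       \<and> positive_cosign (gconcat (map \<Delta> [0..<k])) \<Gamma> p"
proof -
  let ?s = "\<lambda>l. \<Sum>m<l. glen (\<Delta> m)"
  have wf: "\<forall>l<k. length (fst (\<Delta> l)) = Suc (glen (\<Delta> l))"
    using assms(8) unfolding is_gallery_def by blast
  have blocks: "pl l j \<in> {1..i (Suc l) - i l} \<and> positive_entry (\<Delta> l) \<Gamma> j (i l + pl l j)"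
    if "l < k" "j \<in> {1..glen (\<Delta> l)}" for l j
  proof (rule positive_entry_lifted_block[OF assms(1) _ assms(2)])
    show "i l \<le> i (Suc l)" "i (Suc l) \<le> glen \<Gamma>"
      using that(1) assms(5,6) bounded_Suc_mono_le[OF assms(5), of "Suc l" k] by auto
  qed (use that assms(7,8,10) in auto)
  have p_blocks: "\<forall>l<k. \<forall>j\<in>{1..glen (\<Delta> l)}. p (?s l + j) = i l + pl l j"
    using assms(11) by (simp add: lessThan_Suc_atMost[symmetric])
  have mono: "strict_mono_on {1..?s k} p \<and> p ` {1..?s k} \<subseteq> {i 0<..i k}"
    using strict_mono_on_blocks[OF assms(5) _ p_blocks] blocks assms(10) by blast
  have entries: "\<forall>j\<in>{1..?s k}. positive_entry (gconcat (map \<Delta> [0..<k])) \<Gamma> j (p j)"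
  proof
    fix j assume "j \<in> {1..?s k}"
    then obtain l j' where "l < k" "j' \<in> {1..glen (\<Delta> l)}" "j = ?s l + j'"
      using index_in_block by blast
    thus "positive_entry (gconcat (map \<Delta> [0..<k])) \<Gamma> j (p j)"
      using positive_entry_gconcat_map[OF wf assms(9)] blocks p_blocks by simp
  qed
  show ?thesis
    by (rule ppair_positive_if_positive_entries)
      (use mono entries glen_gconcat_map[OF wf assms(9)] assms(4,6)
        in \<open>simp_all add: atLeastSucAtMost_greaterThanAtMost[symmetric]\<close>)
qed

end
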